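(* Let $F_1$ and $F_2$ be sensori-computational devices, and let $R_1\subseteq A\times B$ and $R_2\subseteq C\times E$ be length compatible relations such that $F_1$ is output simulatable modulo $R_1$ and $F_2$ is output simulatable modulo $R_2$. Define the relation $R_{1\times2}$ on sequences of pairs by: $\big((a_1,c_1)\cdots(a_n,c_n)\big)\,R_{1\times2}\,\big((b_1,e_1)\cdots(b_m,e_m)\big)$ if and only if $(a_1\cdots a_n)\,R_1\,(b_1\cdots b_m)$ and $(c_1\cdots c_n)\,R_2\,(e_1\cdots e_m)$. Then the direct product $F_1\times F_2$ is output simulatable modulo $R_{1\times2}$.
   Context: A sensori-computational device is a 6-tuple $F=(V,V_0,Y,\tau,C,c)$ where $V$ is a non-empty finite set of states, $V_0\subseteq V$ a non-empty set of initial states, $Y=Y(F)$ a finite set of observations, $\tau:V\times V\to\mathcal{P}(Y)$, $C$ a set of outputs, $c:V\to\mathcal{P}(C)\setminus\{\emptyset\}$. A string $y_1\cdots y_n$ reaches $w$ from $v$ if there are states $w_0=v,\dots,w_n=w$ with $y_i\in\tau(w_{i-1},w_i)$; $\mathcal{R}_F(s)$ is the set of states reached by $s$ from some initial state; $\mathcal{L}(F)=\{s\in Y^*:\mathcal{R}_F(s)\ne\emptyset\}$; $\mathcal{C}_F(s)=\bigcup_{v\in\mathcal{R}_F(s)}c(v)$. For a relation $R\subseteq A\times B$ between sets of strings, $F'$ output simulates $F$ modulo $R$ if for every $s\in\mathcal{L}(F)$: (1) some $t\in\mathcal{L}(F')$ has $s\,R\,t$; (2) every $t\in B$ with $s\,R\,t$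 satisfies $t\in\mathcal{L}(F')$ and $\mathcal{C}_F(s)\supseteq\mathcal{C}_{F'}(t)$; $F$ is output simulatable modulo $R$ if some device $F'$ output simulates $F$ modulo $R$. The direct product of $F=(V,V_0,Y,\tau,C,c)$ and $F'=(V',V_0',Y',\tau',C',c')$ is $F\times F'=(V\times V',V_0\times V_0',Y\times Y',\tau_{\times},C\times C',c_{\times})$ with $\tau_\times((v,v'),(w,w'))=\tau(v,w)\times\tau'(v',w')$ and $c_\times(v,v')=c(v)\times c'(v')$. Relations $R_1\subseteq A\times B$ and $R_2\subseteq C\times E$, where $A,B,C,E$ are sets of sequences over some alphabets, are length compatible if for every $a\in A$ and $c\in C$ with $|a|=|c|$ there exist $b$ and $e$ with $|b|=|e|$, $a\,R_1\,b$ and $c\,R_2\,e$. *)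

theory Defs
  imports Main
begin

record ('v, 'y, 'c) device =
  states :: "'v set"
  init   :: "'v set"
  obs    :: "'y set"
  trans  :: "'v \<Rightarrow> 'v \<Rightarrow> 'y set"
  outs   :: "'c set"
  out    :: "'v \<Rightarrow> 'c set"

definition wf_device :: "('v, 'y, 'c) device \<Rightarrow> bool" where
  "wf_device F \<longleftrightarrow>
     finite (states F) \<and> states F \<noteq> {} \<and>
     init F \<subseteq> states F \<and> init F \<noteq> {} \<and>
     finite (obs F) \<and>
     (\<forall>v\<in>states F. \<forall>w\<in>states F. trans F v w \<subseteq> obs F) \<and>
     (\<forall>v\<in>states F. out F v \<subseteq> outs F \<and> out F v \<noteq> {})"

fun reaches :: "('v, 'y, 'c) device \<Rightarrow> 'v \<Rightarrow> 'y list \<Rightarrow> 'v \<Rightarrow> bool" where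
  "reaches F v [] w \<longleftrightarrow> v \<in> states F \<and> v = w"
| "reaches F v (y # ys) w \<longleftrightarrow>
     v \<in> states F \<and> (\<exists>u\<in>states F. y \<in> trans F v u \<and> reaches F u ys w)"

definition reached :: "('v, 'y, 'c) device \<Rightarrow> 'y list \<Rightarrow> 'v set" where
  "reached F s = {w. \<exists>v\<in>init F. reaches F v s w}"

definition lang :: "('v, 'y, 'c) device \<Rightarrow> 'y list set" where
  "lang F = {s. reached F s \<noteq> {}}"

definition outputs :: "('v, 'y, 'c) device \<Rightarrow> 'y list \<Rightarrow> 'c set" where
  "outputs F s = (\<Union>v\<in>reached F s. out F v)"

text \<open>F' output simulates F modulo R (R \<subseteq> A \<times> B, so "t \<in> B with s R t" is just (s,t) \<in> R).\<close>
definition output_simulates ::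
  "('w, 'z, 'c) device \<Rightarrow> ('v, 'y, 'c) device \<Rightarrow> ('y list \<times> 'z list) set \<Rightarrow> bool" where
  "output_simulates F' F R \<longleftrightarrow> wf_device F' \<and>
     (\<forall>s\<in>lang F. (\<exists>t\<in>lang F'. (s, t) \<in> R) \<and>
        (\<forall>t. (s, t) \<in> R \<longrightarrow> t \<in> lang F' \<and> outputs F' t \<subseteq> outputs F s))"

text \<open>Output simulatable: some device (with states encoded as natural numbers;
  every finite state set is isomorphic to a finite set of naturals) output simulates F.\<close>
definition output_simulatable ::
  "('v, 'y, 'c) device \<Rightarrow> ('y list \<times> 'z list) set \<Rightarrow> bool" where
  "output_simulatable F R \<longleftrightarrow> (\<exists>F' :: (nat, 'z, 'c) device. output_simulates F' F R)"

definition direct_product ::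
  "('v, 'y, 'c) device \<Rightarrow> ('v2, 'y2, 'c2) device \<Rightarrow> ('v \<times> 'v2, 'y \<times> 'y2, 'c \<times> 'c2) device" where
  "direct_product F G =
     \<lparr> states = states F \<times> states G,
       init = init F \<times> init G,
       obs = obs F \<times> obs G,
       trans = (\<lambda>(v, v') (w, w'). trans F v w \<times> trans G v' w'),
       outs = outs F \<times> outs G,
       out = (\<lambda>(v, v'). out F v \<times> out G v') \<rparr>"

definition length_compatible ::
  "'a list set \<Rightarrow> 'c list set \<Rightarrow> ('a list \<times> 'b list) set \<Rightarrow> ('c list \<times> 'e list) set \<Rightarrow> bool" where
  "length_compatible A C R1 R2 \<longleftrightarrow>
     (\<forall>a\<in>A. \<forall>c\<in>C. length a = length c \<longrightarrow>
        (\<exists>b e. length b = length e \<and> (a, b) \<in> R1 \<and> (c, e) \<in> R2))"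

definition prod_rel ::
  "('a list \<times> 'b list) set \<Rightarrow> ('c list \<times> 'e list) set \<Rightarrow> (('a \<times> 'c) list \<times> ('b \<times> 'e) list) set" where
  "prod_rel R1 R2 = {(p, q). (map fst p, map fst q) \<in> R1 \<and> (map snd p, map snd q) \<in> R2}"

end

theory Submission
  imports Defs "HOL-Library.Countable"
begin

text \<open>The direct product runs both devices in lockstep, so a string of pairs reaches a pair of
  states exactly when its two projections reach the components; hence the language, the
  reached sets and the outputs of a product are products of those of the factors. A simulating
  device for \<open>F\<^sub>1 \<times> F\<^sub>2\<close> is then the product of simulating devices for \<open>F\<^sub>1\<close> and \<open>F\<^sub>2\<close>: both
  simulation conditions split componentwise, and length compatibility provides equally long
  related strings for the two projections, which can be zipped into a related string of pairs.
  As output simulatability asks for a device with natural-number states, the pairs of states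
  of this product are finally renamed along an injection into the naturals.\<close>

lemma reaches_states: "reaches F v s w \<Longrightarrow> v \<in> states F \<and> w \<in> states F"
  by (induction s arbitrary: v) auto

lemma reaches_direct_product:
  "reaches (direct_product F G) (v, v') s (w, w') \<longleftrightarrow>
     reaches F v (map fst s) w \<and> reaches G v' (map snd s) w'"
proof (induction s arbitrary: v v')
  case Nil
  then show ?case by (auto simp: direct_product_def)
next
  case (Cons y ys)
  then show ?case by (cases y) (auto simp: direct_product_def)
qed

lemma reached_direct_product:
  "reached (direct_product F G) s = reached F (map fst s) \<times> reached G (map snd s)"
proof -
  have "init (direct_product F G) = init F \<times> init G"
    by (simp add: direct_product_def)
  then show ?thesis
    by (auto simp: reached_def reaches_direct_product)
qed

lemma lang_direct_product:
  "s \<in> lang (direct_product F G) \<longleftrightarrow> map fst s \<in> lang F \<and> map snd s \<in> lang G"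
  by (simp add: lang_def reached_direct_product)

lemma outputs_direct_product:
  "outputs (direct_product F G) s = outputs F (map fst s) \<times> outputs G (map snd s)"
  unfolding outputs_def reached_direct_product by (auto simp: direct_product_def)

lemma wf_device_direct_product:
  "wf_device F \<Longrightarrow> wf_device G \<Longrightarrow> wf_device (direct_product F G)"
  by (auto simp: wf_device_def direct_product_def subset_iff)

lemma output_simulatesD:
  assumes "output_simulates G F R" and "s \<in> lang F"
  shows "\<exists>t\<in>lang G. (s, t) \<in> R"
    and "(s, t) \<in> R \<Longrightarrow> t \<in> lang G"
    and "(s, t) \<in> R \<Longrightarrow> outputs G t \<subseteq> outputs F s"
  using assms unfolding output_simulates_def by blast+

lemma output_simulates_direct_product:
  assumes sim1: "output_simulates G1 F1 R1" and sim2: "output_simulates G2 F2 R2"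
    and "R1 \<subseteq> A \<times> B" and "R2 \<subseteq> C \<times> E" and "length_compatible A C R1 R2"
  shows "output_simulates (direct_product G1 G2) (direct_product F1 F2) (prod_rel R1 R2)"
  unfolding output_simulates_def
proof (intro conjI ballI allI impI)
  show "wf_device (direct_product G1 G2)"
    using sim1 sim2 by (simp add: output_simulates_def wf_device_direct_product)
next
  fix s assume "s \<in> lang (direct_product F1 F2)"
  then have s1: "map fst s \<in> lang F1" and s2: "map snd s \<in> lang F2"
    by (simp_all add: lang_direct_product)
  have "map fst s \<in> A" and "map snd s \<in> C"
    using output_simulatesD(1)[OF sim1 s1] output_simulatesD(1)[OF sim2 s2] assms(3,4)
    by blast+
  then obtain b e where len: "length b = length e" and b: "(map fst s, b) \<in> R1"
    and e: "(map snd s, e) \<in> R2"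
    using \<open>length_compatible A C R1 R2\<close> unfolding length_compatible_def by fastforce
  have "zip b e \<in> lang (direct_product G1 G2)"
    using output_simulatesD(2)[OF sim1 s1 b] output_simulatesD(2)[OF sim2 s2 e] len
    by (simp add: lang_direct_product)
  moreover have "(s, zip b e) \<in> prod_rel R1 R2"
    using b e len by (simp add: prod_rel_def)
  ultimately show "\<exists>t\<in>lang (direct_product G1 G2). (s, t) \<in> prod_rel R1 R2"
    by blast
next
  fix s t assume "s \<in> lang (direct_product F1 F2)" and "(s, t) \<in> prod_rel R1 R2"
  then have s1: "map fst s \<in> lang F1" and s2: "map snd s \<in> lang F2"
    and t1: "(map fst s, map fst t) \<in> R1" and t2: "(map snd s, map snd t) \<in> R2"
    by (simp_all add: lang_direct_product prod_rel_def)
  show "t \<in> lang (direct_product G1 G2)"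
    using output_simulatesD(2)[OF sim1 s1 t1] output_simulatesD(2)[OF sim2 s2 t2]
    by (simp add: lang_direct_product)
  show "outputs (direct_product G1 G2) t \<subseteq> outputs (direct_product F1 F2) s"
    using output_simulatesD(3)[OF sim1 s1 t1] output_simulatesD(3)[OF sim2 s2 t2]
    by (simp add: outputs_direct_product Sigma_mono)
qed

text \<open>Off the range of \<open>f\<close> the values of \<open>inv f\<close> are arbitrary, but such states are
  never reached.\<close>

definition rename_states :: "('v \<Rightarrow> 'w) \<Rightarrow> ('v, 'y, 'c) device \<Rightarrow> ('w, 'y, 'c) device" where
  "rename_states f F =
     \<lparr> states = f ` states F, init = f ` init F, obs = obs F,
       trans = (\<lambda>v w. trans F (inv f v) (inv f w)),
       outs = outs F, out = (\<lambda>v. out F (inv f v)) \<rparr>"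

lemma reaches_rename_states:
  assumes "inj f"
  shows "reaches (rename_states f F) (f v) s (f w) \<longleftrightarrow> reaches F v s w"
proof (induction s arbitrary: v)
  case Nil
  then show ?case using assms by (auto simp: rename_states_def inj_eq)
next
  case (Cons y ys)
  then show ?case using assms by (auto simp: rename_states_def inj_image_mem_iff)
qed

lemma reached_rename_states:
  assumes "inj f"
  shows "reached (rename_states f F) s = f ` reached F s"
proof -
  have init: "init (rename_states f F) = f ` init F"
    by (simp add: rename_states_def)
  have "x \<in> f ` states F" if "reaches (rename_states f F) v s x" for v x
    using reaches_states[OF that] by (simp add: rename_states_def)
  then show ?thesis
    unfolding reached_def init using assms by (fastforce simp: reaches_rename_states)
qed

lemma output_simulates_rename_states:
  assumes "output_simulates G F R" and "inj f"
  shows "output_simulates (rename_states f G) F R"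
proof -
  have "out (rename_states f G) (f v) = out G v" for v
    using \<open>inj f\<close> by (simp add: rename_states_def)
  then have "lang (rename_states f G) = lang G"
    and "outputs (rename_states f G) t = outputs G t" for t
    using \<open>inj f\<close> by (simp_all add: lang_def outputs_def reached_rename_states)
  moreover have "wf_device (rename_states f G)"
    using assms by (auto simp: output_simulates_def wf_device_def rename_states_def)
  ultimately show ?thesis
    using assms(1) unfolding output_simulates_def by simp
qed

lemma output_simulatable_if_simulated_by_countable:
  fixes G :: "('w :: countable, 'z, 'c) device"
  assumes "output_simulates G F R"
  shows "output_simulatable F R"
  unfolding output_simulatable_def
  using output_simulates_rename_states[OF assms inj_to_nat] by (rule exI)

theorem proposition3:
  fixes F1 :: "('v1, 'a, 'o1) device" and F2 :: "('v2, 'c, 'o2) device"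
    and A :: "'a list set" and B :: "'b list set" and C :: "'c list set" and E :: "'e list set"
    and R1 :: "('a list \<times> 'b list) set" and R2 :: "('c list \<times> 'e list) set"
  assumes "wf_device F1" and "wf_device F2"
    and "R1 \<subseteq> A \<times> B" and "R2 \<subseteq> C \<times> E"
    and "length_compatible A C R1 R2"
    and "output_simulatable F1 R1" and "output_simulatable F2 R2"
  shows "output_simulatable (direct_product F1 F2) (prod_rel R1 R2)"
proof -
  obtain G1 :: "(nat, 'b, 'o1) device" and G2 :: "(nat, 'e, 'o2) device"
    where "output_simulates G1 F1 R1" and "output_simulates G2 F2 R2"
    using assms(6,7) unfolding output_simulatable_def by blast
  then have "output_simulates (direct_product G1 G2) (direct_product F1 F2) (prod_rel R1 R2)"
    using assms(3-5) by (rule output_simulates_direct_product)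
  then show ?thesis
    by (rule output_simulatable_if_simulated_by_countable)
qed

end
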